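(* For every $m\in\mathbb{Q}$ with $m\notin\{0,1,-1\}$, consider the tetrahedron in $\mathbb{R}^3$ with vertices \begin{align*} P_1&=(0,0,0),\qquad P_2=\big(10(m^4-1)(m^4+3m^2+1),\,0,\,0\big),\\ P_3&=\Big(\tfrac{2(m^2-1)(m^2+4)(3m^2+2)^2}{5},\ \tfrac{(m^2+4)(2m^2+3)(3m^2+2)(4m^2+1)}{5},\ 0\Big),\\ P_4&=\Big(\tfrac{2(m^2-1)(2m^2+3)^2(4m^2+1)}{5},\ -\tfrac{(2m^2+3)(2m^2-5m-2)(2m^2+5m-2)(3m^2+2)}{5},\ 4(m^2-1)m(2m^2+3)(3m^2+2)\Big). \end{align*} Then its four faces are congruent triangles (opposite edges have equal length), and all six edge lengths, all four face areas, and the volume of this tetrahedron are rational numbers.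
   Context: No further context is needed. *)

theory Defs
  imports "HOL-Analysis.Analysis"
begin

definition triangle_area :: "real^3 \<Rightarrow> real^3 \<Rightarrow> real^3 \<Rightarrow> real" where
  "triangle_area A B C = norm (cross3 (B - A) (C - A)) / 2"

definition tetra_volume :: "real^3 \<Rightarrow> real^3 \<Rightarrow> real^3 \<Rightarrow> real^3 \<Rightarrow> real" where
  "tetra_volume A B C D = \<bar>(B - A) \<bullet> cross3 (C - A) (D - A)\<bar> / 6"

end

theory Submission
  imports Defs
begin

text \<open>Each edge length, twice the area of one face and six times the volume are absolute
  values of polynomials in \<open>m\<close> with rational coefficients (the relevant radicands are perfect
  squares), so all these quantities are rational. Since opposite edges are equal, every face has the same three side lengths, and by
  Heron's formula the same area as the computed face.\<close>

lemma inner_vec3: "(x::real^3) \<bullet> y = x$1 * y$1 + x$2 * y$2 + x$3 * y$3"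
  by (simp add: inner_vec_def sum_3)

lemma cross3_components:
  "cross3 x y = vector [x$2 * y$3 - x$3 * y$2, x$3 * y$1 - x$1 * y$3, x$1 * y$2 - x$2 * y$1]"
  by (simp add: cross3_def)

lemma norm_eq_abs_if_inner_self_eq:
  fixes x :: "'a::real_inner"
  assumes "x \<bullet> x = p\<^sup>2"
  shows "norm x = \<bar>p\<bar>"
  using assms by (simp add: norm_eq_sqrt_inner)

lemma dist_eq_abs_if_inner_diff_eq:
  fixes x y :: "'a::real_inner"
  assumes "(x - y) \<bullet> (x - y) = p\<^sup>2"
  shows "dist x y = \<bar>p\<bar>"
  using assms by (simp add: dist_norm norm_eq_abs_if_inner_self_eq)

lemma triangle_area_heron:
  "(4 * triangle_area A B C)\<^sup>2 =
     2 * ((dist B C)\<^sup>2 * (dist A C)\<^sup>2 + (dist A C)\<^sup>2 * (dist A B)\<^sup>2 + (dist A B)\<^sup>2 * (dist B C)\<^sup>2)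
     - ((dist B C)^4 + (dist A C)^4 + (dist A B)^4)"
proof -
  define u v where "u = B - A" and "v = C - A"
  have "(norm (cross3 u v))\<^sup>2 = (norm u * norm v)\<^sup>2 - (u \<bullet> v)\<^sup>2"
    using norm_cross_dot[of u v] by simp
  moreover have "(norm (u - v))\<^sup>2 = (norm u)\<^sup>2 + (norm v)\<^sup>2 - 2 * (u \<bullet> v)"
    by (simp add: power2_norm_eq_inner inner_diff algebra_simps inner_commute)
  moreover have "dist B C = norm (u - v)" "dist A C = norm v" "dist A B = norm u"
    by (simp_all add: u_def v_def dist_norm norm_minus_commute)
  ultimately show ?thesis
    unfolding triangle_area_def u_def [symmetric] v_def [symmetric]
    by (simp add: power_mult_distrib) algebra
qed

lemma triangle_area_eq_if_same_sides:
  assumes "dist A B = dist A' B'" "dist A C = dist A' C'" "dist B C = dist B' C'"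
  shows "triangle_area A B C = triangle_area A' B' C'"
proof -
  have "(4 * triangle_area A B C)\<^sup>2 = (4 * triangle_area A' B' C')\<^sup>2"
    unfolding triangle_area_heron assms ..
  then show ?thesis
    by (simp add: triangle_area_def)
qed

lemma triangle_area_swap: "triangle_area B A C = triangle_area A B C"
proof -
  have "(4 * triangle_area B A C)\<^sup>2 = (4 * triangle_area A B C)\<^sup>2"
    unfolding triangle_area_heron by (simp add: dist_commute algebra_simps)
  then show ?thesis
    by (simp add: triangle_area_def)
qed

lemma triangle_area_rotate: "triangle_area B C A = triangle_area A B C"
proof -
  have "(4 * triangle_area B C A)\<^sup>2 = (4 * triangle_area A B C)\<^sup>2"
    unfolding triangle_area_heron by (simp add: dist_commute algebra_simps)
  then show ?thesis
    by (simp add: triangle_area_def)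
qed

lemma isosceles_tetrahedron_face_areas:
  assumes "dist A B = dist C D" "dist A C = dist B D" "dist A D = dist B C"
  shows "triangle_area A B D = triangle_area A B C"
    and "triangle_area A C D = triangle_area A B C"
    and "triangle_area B C D = triangle_area A B C"
proof -
  have "triangle_area A B D = triangle_area B A C"
    using assms by (intro triangle_area_eq_if_same_sides) (simp_all add: dist_commute)
  then show "triangle_area A B D = triangle_area A B C"
    by (simp add: triangle_area_swap)
  have "triangle_area A C D = triangle_area C A B"
    using assms by (intro triangle_area_eq_if_same_sides) (simp_all add: dist_commute)
  then show "triangle_area A C D = triangle_area A B C"
    by (simp add: triangle_area_rotate)
  have "triangle_area B C D = triangle_area C B A"
    using assms by (intro triangle_area_eq_if_same_sides) (simp_all add: dist_commute)
  then show "triangle_area B C D = triangle_area A B C"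
    by (simp add: triangle_area_swap triangle_area_rotate)
qed

theorem mainTheorem9:
  fixes m :: real and P1 P2 P3 P4 :: "real^3"
  assumes "m \<in> \<rat>" and "m \<notin> {0, 1, -1}"
    and "P1 = vector [0, 0, 0]"
    and "P2 = vector [10 * (m^4 - 1) * (m^4 + 3*m^2 + 1), 0, 0]"
    and "P3 = vector [2 * (m^2 - 1) * (m^2 + 4) * (3*m^2 + 2)^2 / 5,
                      (m^2 + 4) * (2*m^2 + 3) * (3*m^2 + 2) * (4*m^2 + 1) / 5,
                      0]"
    and "P4 = vector [2 * (m^2 - 1) * (2*m^2 + 3)^2 * (4*m^2 + 1) / 5,
                      - ((2*m^2 + 3) * (2*m^2 - 5*m - 2) * (2*m^2 + 5*m - 2) * (3*m^2 + 2) / 5),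
                      4 * (m^2 - 1) * m * (2*m^2 + 3) * (3*m^2 + 2)]"
  shows "dist P1 P2 = dist P3 P4 \<and> dist P1 P3 = dist P2 P4 \<and> dist P1 P4 = dist P2 P3
    \<and> dist P1 P2 \<in> \<rat> \<and> dist P1 P3 \<in> \<rat> \<and> dist P1 P4 \<in> \<rat>
    \<and> dist P2 P3 \<in> \<rat> \<and> dist P2 P4 \<in> \<rat> \<and> dist P3 P4 \<in> \<rat>
    \<and> triangle_area P1 P2 P3 \<in> \<rat> \<and> triangle_area P1 P2 P4 \<in> \<rat>
    \<and> triangle_area P1 P3 P4 \<in> \<rat> \<and> triangle_area P2 P3 P4 \<in> \<rat>
    \<and> tetra_volume P1 P2 P3 P4 \<in> \<rat>"
proof -
  define a where "a = 10*m^8 + 30*m^6 - 30*m^2 - 10"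
  define b where "b = 6*m^8 + 34*m^6 + 47*m^4 + 30*m^2 + 8"
  define c where "c = 8*m^8 + 30*m^6 + 47*m^4 + 34*m^2 + 6"
  define q where "q = 48*m^16 + 452*m^14 + 1462*m^12 + 1778*m^10 - 1778*m^6 - 1462*m^4 - 452*m^2 - 48"
  define v where "v = 1152*m + 12192*m^3 + 46400*m^5 + 69800*m^7 - 2000*m^9 - 127544*m^11
    - 127544*m^13 - 2000*m^15 + 69800*m^17 + 46400*m^19 + 12192*m^21 + 1152*m^23"
  have rational: "a \<in> \<rat>" "b \<in> \<rat>" "c \<in> \<rat>" "q \<in> \<rat>" "v \<in> \<rat>"
    using \<open>m \<in> \<rat>\<close> unfolding a_def b_def c_def q_def v_def
    by (auto intro!: Rats_add Rats_diff Rats_mult Rats_power)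
  have edges: "dist P1 P2 = \<bar>a\<bar>" "dist P3 P4 = \<bar>a\<bar>" "dist P1 P3 = \<bar>b\<bar>"
    "dist P2 P4 = \<bar>b\<bar>" "dist P1 P4 = \<bar>c\<bar>" "dist P2 P3 = \<bar>c\<bar>"
    by (rule dist_eq_abs_if_inner_diff_eq, unfold inner_vec3,
        simp add: assms a_def b_def c_def, algebra)+
  have face: "triangle_area P1 P2 P3 = \<bar>q\<bar> / 2"
    unfolding triangle_area_def
    by (subst norm_eq_abs_if_inner_self_eq[where p = q], unfold inner_vec3 cross3_components)
      (simp_all add: assms q_def, algebra)
  have "(P2 - P1) \<bullet> cross3 (P3 - P1) (P4 - P1) = v"
    unfolding inner_vec3 cross3_components by (simp add: assms v_def, algebra)
  then have volume: "tetra_volume P1 P2 P3 P4 = \<bar>v\<bar> / 6"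
    by (simp add: tetra_volume_def)
  have "dist P1 P2 = dist P3 P4" "dist P1 P3 = dist P2 P4" "dist P1 P4 = dist P2 P3"
    using edges by simp_all
  note faces = isosceles_tetrahedron_face_areas[OF this]
  show ?thesis
    using rational unfolding edges faces face volume by (simp add: Rats_divide)
qed

end
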